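(* Let $R=\begin{pmatrix} A & M\\ N & B\end{pmatrix}$ be a Morita context ring such that $MN$ is a nilpotent ideal of $A$ and $NM$ is a nilpotent ideal of $B$. If $R$ is a GWNC ring, then $A$ and $B$ are weakly nil-clean rings. Conversely, if one of $A$, $B$ is nil-clean and the other is weakly nil-clean, then $R$ is GWNC.
   Context: All rings are associative with identity. A Morita context ring: $A,B$ rings, $M$ an $(A,B)$-bimodule, $N$ a $(B,A)$-bimodule, with bilinear maps $\phi:M\otimes_B N\to A$, $\psi:N\otimes_A M\to B$ satisfying ${\rm Id}_M\otimes\psi=\phi\otimes{\rm Id}_M$ and ${\rm Id}_N\otimes\phi=\psi\otimes{\rm Id}_N$; writing $mn=\phi(m\otimes n)$, $nm=\psi(n\otimes m)$, the set of matrices $\begin{pmatrix} a & m\\ n & b\end{pmatrix}$ is a ring under matrix operations; $MN={\rm Im}\,\phi$, $NM={\rm Im}\,\psi$. For a ring $S$, $U(S)$, ${\rm Nil}(S)$, ${\rm Id}(S)$ denote units, nilpotents, idempotents. $S$ is GWNC if every $a\in S\setminus U(S)$ can be written as $a=q+e$ or $a=q-e$ with $q\in{\rm Nil}(S)$, $e\in{\rm Id}(S)$. $S$ is weakly nil-clean if for every $a\in S$ there is $e\in{\rm Id}(S)$ with $a-e$ or $a+e$ nilpotent; $S$ is nil-clean if every element is a sum of an idempotent and a nilpotent. *)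

theory Defs
  imports Main
begin

definition unit_op :: "('r \<Rightarrow> 'r \<Rightarrow> 'r) \<Rightarrow> 'r \<Rightarrow> 'r \<Rightarrow> bool" where
  "unit_op mul one x \<longleftrightarrow> (\<exists>y. mul x y = one \<and> mul y x = one)"

definition nil_op :: "('r \<Rightarrow> 'r \<Rightarrow> 'r) \<Rightarrow> 'r \<Rightarrow> 'r \<Rightarrow> 'r \<Rightarrow> bool" where
  "nil_op mul zero one x \<longleftrightarrow> (\<exists>k::nat. ((mul x) ^^ k) one = zero)"

definition idem_op :: "('r \<Rightarrow> 'r \<Rightarrow> 'r) \<Rightarrow> 'r \<Rightarrow> bool" where
  "idem_op mul e \<longleftrightarrow> mul e e = e"

definition GWNC_op :: "('r \<Rightarrow> 'r \<Rightarrow> 'r) \<Rightarrow> ('r \<Rightarrow> 'r \<Rightarrow> 'r) \<Rightarrow> ('r \<Rightarrow> 'r)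
    \<Rightarrow> 'r \<Rightarrow> 'r \<Rightarrow> bool" where
  "GWNC_op mul add neg zero one \<longleftrightarrow>
     (\<forall>a. \<not> unit_op mul one a \<longrightarrow>
        (\<exists>q e. nil_op mul zero one q \<and> idem_op mul e \<and>
               (a = add q e \<or> a = add q (neg e))))"

definition weakly_nil_clean_op :: "('r \<Rightarrow> 'r \<Rightarrow> 'r) \<Rightarrow> ('r \<Rightarrow> 'r \<Rightarrow> 'r) \<Rightarrow> ('r \<Rightarrow> 'r)
    \<Rightarrow> 'r \<Rightarrow> 'r \<Rightarrow> bool" where
  "weakly_nil_clean_op mul add neg zero one \<longleftrightarrow>
     (\<forall>a. \<exists>e. idem_op mul e \<and>
        (nil_op mul zero one (add a (neg e)) \<or> nil_op mul zero one (add a e)))"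

definition nil_clean_op :: "('r \<Rightarrow> 'r \<Rightarrow> 'r) \<Rightarrow> ('r \<Rightarrow> 'r \<Rightarrow> 'r) \<Rightarrow> 'r \<Rightarrow> 'r \<Rightarrow> bool" where
  "nil_clean_op mul add zero one \<longleftrightarrow>
     (\<forall>a. \<exists>q e. nil_op mul zero one q \<and> idem_op mul e \<and> a = add e q)"

definition weakly_nil_clean :: "'a::ring_1 itself \<Rightarrow> bool" where
  "weakly_nil_clean _ \<longleftrightarrow> weakly_nil_clean_op ((*) :: 'a \<Rightarrow> 'a \<Rightarrow> 'a) (+) uminus 0 1"

definition nil_clean :: "'a::ring_1 itself \<Rightarrow> bool" where
  "nil_clean _ \<longleftrightarrow> nil_clean_op ((*) :: 'a \<Rightarrow> 'a \<Rightarrow> 'a) (+) 0 1"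

definition nilpotent_set :: "'a::ring_1 set \<Rightarrow> bool" where
  "nilpotent_set I \<longleftrightarrow>
     (\<exists>k::nat. \<forall>x :: nat \<Rightarrow> 'a. (\<forall>i<k. x i \<in> I) \<longrightarrow> prod_list (map x [0..<k]) = 0)"

text \<open>Data: A ('a), B ('b) rings; M ('m) an (A,B)-bimodule with actions lA, rB;
  N ('n) a (B,A)-bimodule with actions lB, rA; pairings phi: M x N -> A, psi: N x M -> B.\<close>

definition morita_context ::
  "('a::ring_1 \<Rightarrow> 'm::ab_group_add \<Rightarrow> 'm) \<Rightarrow> ('m \<Rightarrow> 'b::ring_1 \<Rightarrow> 'm)
   \<Rightarrow> ('b \<Rightarrow> 'n::ab_group_add \<Rightarrow> 'n) \<Rightarrow> ('n \<Rightarrow> 'a \<Rightarrow> 'n)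
   \<Rightarrow> ('m \<Rightarrow> 'n \<Rightarrow> 'a) \<Rightarrow> ('n \<Rightarrow> 'm \<Rightarrow> 'b) \<Rightarrow> bool" where
  "morita_context lA rB lB rA phi psi \<longleftrightarrow>
    \<comment> \<open>M is an (A,B)-bimodule\<close>
    (\<forall>a a' m. lA (a + a') m = lA a m + lA a' m) \<and>
    (\<forall>a m m'. lA a (m + m') = lA a m + lA a m') \<and>
    (\<forall>a a' m. lA (a * a') m = lA a (lA a' m)) \<and>
    (\<forall>m. lA 1 m = m) \<and>
    (\<forall>m b b'. rB m (b + b') = rB m b + rB m b') \<and>
    (\<forall>m m' b. rB (m + m') b = rB m b + rB m' b) \<and>
    (\<forall>m b b'. rB m (b * b') = rB (rB m b) b') \<and>
    (\<forall>m. rB m 1 = m) \<and>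
    (\<forall>a m b. lA a (rB m b) = rB (lA a m) b) \<and>
    \<comment> \<open>N is a (B,A)-bimodule\<close>
    (\<forall>b b' n. lB (b + b') n = lB b n + lB b' n) \<and>
    (\<forall>b n n'. lB b (n + n') = lB b n + lB b n') \<and>
    (\<forall>b b' n. lB (b * b') n = lB b (lB b' n)) \<and>
    (\<forall>n. lB 1 n = n) \<and>
    (\<forall>n a a'. rA n (a + a') = rA n a + rA n a') \<and>
    (\<forall>n n' a. rA (n + n') a = rA n a + rA n' a) \<and>
    (\<forall>n a a'. rA n (a * a') = rA (rA n a) a') \<and>
    (\<forall>n. rA n 1 = n) \<and>
    (\<forall>b n a. lB b (rA n a) = rA (lB b n) a) \<and>
    \<comment> \<open>phi : M \<otimes>_B N \<rightarrow> A is an (A,A)-bimodule map\<close>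
    (\<forall>m m' n. phi (m + m') n = phi m n + phi m' n) \<and>
    (\<forall>m n n'. phi m (n + n') = phi m n + phi m n') \<and>
    (\<forall>m b n. phi (rB m b) n = phi m (lB b n)) \<and>
    (\<forall>a m n. phi (lA a m) n = a * phi m n) \<and>
    (\<forall>m n a. phi m (rA n a) = phi m n * a) \<and>
    \<comment> \<open>psi : N \<otimes>_A M \<rightarrow> B is a (B,B)-bimodule map\<close>
    (\<forall>n n' m. psi (n + n') m = psi n m + psi n' m) \<and>
    (\<forall>n m m'. psi n (m + m') = psi n m + psi n m') \<and>
    (\<forall>n a m. psi (rA n a) m = psi n (lA a m)) \<and>
    (\<forall>b n m. psi (lB b n) m = b * psi n m) \<and>
    (\<forall>n m b. psi n (rB m b) = psi n m * b) \<and>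
    \<comment> \<open>associativity conditions (mn)m' = m(nm'), (nm)n' = n(mn')\<close>
    (\<forall>m n m'. lA (phi m n) m' = rB m (psi n m')) \<and>
    (\<forall>n m n'. lB (psi n m) n' = rA n (phi m n'))"

text \<open>The Morita context ring: elements (a, m, n, b) stand for the matrix [[a, m], [n, b]].\<close>

definition morita_mult ::
  "('a::ring_1 \<Rightarrow> 'm::ab_group_add \<Rightarrow> 'm) \<Rightarrow> ('m \<Rightarrow> 'b::ring_1 \<Rightarrow> 'm)
   \<Rightarrow> ('b \<Rightarrow> 'n::ab_group_add \<Rightarrow> 'n) \<Rightarrow> ('n \<Rightarrow> 'a \<Rightarrow> 'n)
   \<Rightarrow> ('m \<Rightarrow> 'n \<Rightarrow> 'a) \<Rightarrow> ('n \<Rightarrow> 'm \<Rightarrow> 'b)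
   \<Rightarrow> 'a \<times> 'm \<times> 'n \<times> 'b \<Rightarrow> 'a \<times> 'm \<times> 'n \<times> 'b \<Rightarrow> 'a \<times> 'm \<times> 'n \<times> 'b" where
  "morita_mult lA rB lB rA phi psi x y =
    (case x of (a, m, n, b) \<Rightarrow> case y of (a', m', n', b') \<Rightarrow>
      (a * a' + phi m n', lA a m' + rB m b', lB b n' + rA n a', psi n m' + b * b'))"

definition morita_add ::
  "'a::ring_1 \<times> 'm::ab_group_add \<times> 'n::ab_group_add \<times> 'b::ring_1
   \<Rightarrow> 'a \<times> 'm \<times> 'n \<times> 'b \<Rightarrow> 'a \<times> 'm \<times> 'n \<times> 'b" where
  "morita_add x y = (case x of (a, m, n, b) \<Rightarrow> case y of (a', m', n', b') \<Rightarrow>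
      (a + a', m + m', n + n', b + b'))"

definition morita_neg ::
  "'a::ring_1 \<times> 'm::ab_group_add \<times> 'n::ab_group_add \<times> 'b::ring_1 \<Rightarrow> 'a \<times> 'm \<times> 'n \<times> 'b" where
  "morita_neg x = (case x of (a, m, n, b) \<Rightarrow> (- a, - m, - n, - b))"

definition morita_zero :: "'a::ring_1 \<times> 'm::ab_group_add \<times> 'n::ab_group_add \<times> 'b::ring_1" where
  "morita_zero = (0, 0, 0, 0)"

definition morita_one :: "'a::ring_1 \<times> 'm::ab_group_add \<times> 'n::ab_group_add \<times> 'b::ring_1" where
  "morita_one = (1, 0, 0, 1)"

text \<open>MN = Im phi (finite sums of products mn), NM = Im psi.\<close>

definition pair_image :: "('x \<Rightarrow> 'y \<Rightarrow> 'c::comm_monoid_add) \<Rightarrow> 'c set" where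
  "pair_image f = {s. \<exists>(k::nat) u v. s = (\<Sum>i<k. f (u i) (v i))}"

end

theory Submission
  imports Defs
begin

text \<open>Let \<open>J\<close> be the set of matrices whose diagonal entries lie in \<open>MN\<close> and \<open>NM\<close>. Giving entries
  of \<open>MN\<close>, \<open>NM\<close> weight 2 and entries of \<open>M\<close>, \<open>N\<close> weight 1, a product of \<open>w\<close> elements of \<open>J\<close>
  has weight at least \<open>w\<close>, so the nilpotency of \<open>MN\<close> and \<open>NM\<close> makes every element of \<open>J\<close> nilpotent.
  Modulo \<open>J\<close> the diagonal of a power \<open>X^k\<close> is \<open>(x^k, y^k)\<close>, hence a matrix with nilpotent
  diagonal entries is nilpotent. So if \<open>a \<mp> e\<close> and \<open>b \<mp> f\<close> are nilpotent for idempotents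
  \<open>e\<close>, \<open>f\<close> and the same sign, then \<open>[[a, m], [n, b]] \<mp> diag(e, f)\<close> is nilpotent; a nil-clean
  ring admits both signs, so it can follow the sign forced in the weakly nil-clean one.

  Conversely, write the non-unit \<open>diag(a, 0)\<close> as \<open>Q \<plusminus> E\<close>. Then the corners satisfy
  \<open>e^2 - e \<in> MN\<close> and \<open>q^k \<in> MN\<close>; lifting \<open>e\<close> modulo the nilpotent ideal \<open>MN\<close> by Newton's
  iteration yields an idempotent \<open>e'\<close> with \<open>a \<mp> e'\<close> nilpotent.\<close>

section \<open>Nil-clean and weakly nil-clean rings\<close>

definition nilpotent :: "'a::ring_1 \<Rightarrow> bool" where
  "nilpotent x \<longleftrightarrow> (\<exists>k. x ^ k = 0)"

lemma nilpotent_uminus: "nilpotent x \<Longrightarrow> nilpotent (- x)"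
  unfolding nilpotent_def by (metis power_minus mult_zero_right)

lemma nil_op_iff_nilpotent: "nil_op (*) 0 1 x \<longleftrightarrow> nilpotent x"
proof -
  have "((*) x ^^ k) 1 = x ^ k" for k
    by (induction k) auto
  then show ?thesis
    unfolding nil_op_def nilpotent_def by simp
qed

lemma weakly_nil_clean_iff:
  "weakly_nil_clean TYPE('a::ring_1) \<longleftrightarrow>
     (\<forall>a::'a. \<exists>e. e * e = e \<and> (nilpotent (a - e) \<or> nilpotent (a + e)))"
  by (simp add: weakly_nil_clean_def weakly_nil_clean_op_def idem_op_def nil_op_iff_nilpotent)

lemma nil_clean_iff:
  "nil_clean TYPE('a::ring_1) \<longleftrightarrow> (\<forall>a::'a. \<exists>e. e * e = e \<and> nilpotent (a - e))"
proof -
  have "(\<exists>q e. nilpotent q \<and> e * e = e \<and> a = e + q) \<longleftrightarrow> (\<exists>e. e * e = e \<and> nilpotent (a - e))"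
    for a :: 'a
    by (metis add_diff_cancel_left' diff_add_cancel add.commute)
  then show ?thesis
    unfolding nil_clean_def nil_clean_op_def idem_op_def nil_op_iff_nilpotent by blast
qed

lemma nil_clean_plus_idempotent:
  fixes a :: "'a::ring_1"
  assumes "nil_clean TYPE('a)"
  shows "\<exists>e. e * e = e \<and> nilpotent (a + e)"
proof -
  obtain e where "e * e = e" "nilpotent (- a - e)"
    using assms unfolding nil_clean_iff by blast
  moreover have "a + e = - (- a - e)"
    by simp
  ultimately show ?thesis
    by (metis nilpotent_uminus)
qed

lemma common_sign_choice:
  fixes a :: "'a::ring_1" and b :: "'b::ring_1"
  assumes "(nil_clean TYPE('a) \<and> weakly_nil_clean TYPE('b)) \<or>
           (weakly_nil_clean TYPE('a) \<and> nil_clean TYPE('b))"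
  shows "\<exists>e f. e * e = e \<and> f * f = f \<and>
           ((nilpotent (a - e) \<and> nilpotent (b - f)) \<or> (nilpotent (a + e) \<and> nilpotent (b + f)))"
  using assms
proof
  assume A: "nil_clean TYPE('a) \<and> weakly_nil_clean TYPE('b)"
  obtain f where "f * f = f" "nilpotent (b - f) \<or> nilpotent (b + f)"
    using A unfolding weakly_nil_clean_iff by blast
  moreover obtain e where "e * e = e" "nilpotent (a - e)"
    using A unfolding nil_clean_iff by blast
  moreover obtain e' where "e' * e' = e'" "nilpotent (a + e')"
    using A nil_clean_plus_idempotent by blast
  ultimately show ?thesis
    by blast
next
  assume B: "weakly_nil_clean TYPE('a) \<and> nil_clean TYPE('b)"
  obtain e where "e * e = e" "nilpotent (a - e) \<or> nilpotent (a + e)"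
    using B unfolding weakly_nil_clean_iff by blast
  moreover obtain f where "f * f = f" "nilpotent (b - f)"
    using B unfolding nil_clean_iff by blast
  moreover obtain f' where "f' * f' = f'" "nilpotent (b + f')"
    using B nil_clean_plus_idempotent by blast
  ultimately show ?thesis
    by blast
qed

lemma nilpotent_set_iff:
  "nilpotent_set I \<longleftrightarrow> (\<exists>K. \<forall>ys. length ys = K \<longrightarrow> set ys \<subseteq> I \<longrightarrow> prod_list ys = 0)"
proof
  assume "nilpotent_set I"
  then obtain K where K: "\<And>x. \<forall>i<K. x i \<in> I \<Longrightarrow> prod_list (map x [0..<K]) = 0"
    unfolding nilpotent_set_def by blast
  have "prod_list ys = 0" if "length ys = K" "set ys \<subseteq> I" for ys
  proof -
    have "\<forall>i<K. ys ! i \<in> I"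
      using that nth_mem by blast
    then show ?thesis
      using K[of "nth ys"] that(1) map_nth[of ys] by simp
  qed
  then show "\<exists>K. \<forall>ys. length ys = K \<longrightarrow> set ys \<subseteq> I \<longrightarrow> prod_list ys = 0"
    by blast
next
  assume "\<exists>K. \<forall>ys. length ys = K \<longrightarrow> set ys \<subseteq> I \<longrightarrow> prod_list ys = 0"
  then obtain K where K: "\<And>ys. length ys = K \<Longrightarrow> set ys \<subseteq> I \<Longrightarrow> prod_list ys = 0"
    by blast
  have "prod_list (map x [0..<K]) = 0" if "\<forall>i<K. x i \<in> I" for x
    using that by (intro K) auto
  then show "nilpotent_set I"
    unfolding nilpotent_set_def by blast
qed

lemma mult_numeral_commute: "x * numeral w = numeral w * (x::'a::ring_1)"
  by (metis mult_of_nat_commute of_nat_numeral)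

lemma mult_numeral_left_commute: "x * (numeral w * y) = numeral w * (x * (y::'a::ring_1))"
  by (metis mult.assoc mult_numeral_commute)

lemma numeral_mult_combine:
  fixes x y :: "'a::ring_1"
  shows "numeral v * x + (numeral w * x + y) = numeral (v + w) * x + y"
    and "numeral v * x + numeral w * x = numeral (v + w) * x"
    and "x + (numeral w * x + y) = (1 + numeral w) * x + y"
    and "x + numeral w * x = (1 + numeral w) * x"
  by (metis add.assoc distrib_right numeral_plus_numeral mult_1)+

text \<open>Newton's iteration e \<mapsto> 3e^2 - 2e^3 for idempotents squares the defect t = e^2 - e.\<close>
lemma idempotent_newton_step:
  fixes e :: "'a::ring_1"
  defines "g \<equiv> 3 * e * e - 2 * e * e * e" and "t \<equiv> e * e - e"
  shows "g * g - g = t * (t * (4 * t - 3))" and "g - e = t * (1 - 2 * e)"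
  unfolding g_def t_def
  by (simp_all add: algebra_simps mult_numeral_commute[of e] mult_numeral_left_commute[of e]
      numeral_mult_combine)

section \<open>Nilpotent ideals\<close>

locale nilpotent_ideal =
  fixes I :: "'a::ring_1 set" and K :: nat
  assumes zero_mem: "0 \<in> I"
    and add_mem: "x \<in> I \<Longrightarrow> y \<in> I \<Longrightarrow> x + y \<in> I"
    and uminus_mem: "x \<in> I \<Longrightarrow> - x \<in> I"
    and mult_left_mem: "x \<in> I \<Longrightarrow> a * x \<in> I"
    and mult_right_mem: "x \<in> I \<Longrightarrow> x * a \<in> I"
    and prod_list_eq_0: "length ys = K \<Longrightarrow> set ys \<subseteq> I \<Longrightarrow> prod_list ys = 0"
begin

lemma power_eq_0: "x \<in> I \<Longrightarrow> x ^ K = 0"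
  using prod_list_eq_0[of "replicate K x"] by (cases "K = 0") auto

lemma power_diff_mem: "x - y \<in> I \<Longrightarrow> x ^ k - y ^ k \<in> I"
proof (induction k)
  case 0
  then show ?case
    using zero_mem by simp
next
  case (Suc k)
  have "x ^ Suc k - y ^ Suc k = x * (x ^ k - y ^ k) + (x - y) * y ^ k"
    by (simp add: algebra_simps)
  then show ?case
    using Suc by (simp add: add_mem mult_left_mem mult_right_mem)
qed

lemma nilpotent_if_diff_mem:
  assumes "x - q \<in> I" and "q ^ k \<in> I"
  shows "nilpotent x"
proof -
  have "(x ^ k - q ^ k) + q ^ k \<in> I"
    using power_diff_mem[OF assms(1)] assms(2) add_mem by blast
  then have "(x ^ k) ^ K = 0"
    by (simp add: power_eq_0)
  then show ?thesis
    unfolding nilpotent_def by (metis power_mult)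
qed

text \<open>\<open>ann j\<close> stands in for the \<open>j\<close>-th power of \<open>I\<close>, without having to form sums of products.\<close>
definition ann :: "nat \<Rightarrow> 'a set" where
  "ann j = {x. \<forall>ys. length ys = K - j \<longrightarrow> set ys \<subseteq> I \<longrightarrow> prod_list ys * x = 0}"

lemma mem_ann_0: "x \<in> ann 0"
  unfolding ann_def using prod_list_eq_0 by simp

lemma zero_mem_ann: "0 \<in> ann j"
  unfolding ann_def by simp

lemma add_mem_ann: "x \<in> ann j \<Longrightarrow> y \<in> ann j \<Longrightarrow> x + y \<in> ann j"
  unfolding ann_def by (simp add: distrib_left)

lemma mult_right_mem_ann: "x \<in> ann j \<Longrightarrow> x * a \<in> ann j"
  unfolding ann_def by (simp add: mult.assoc[symmetric])

lemma ann_eq_0: "K \<le> j \<Longrightarrow> x \<in> ann j \<Longrightarrow> x = 0"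
  unfolding ann_def by (auto dest: spec[of _ "[]"])

lemma mult_left_mem_ann:
  assumes u: "u \<in> I" and x: "x \<in> ann j"
  shows "u * x \<in> ann (Suc j)"
proof (cases "j < K")
  case True
  show ?thesis
    unfolding ann_def
  proof (intro CollectI allI impI)
    fix ys assume "length ys = K - Suc j" "set ys \<subseteq> I"
    then have "length (ys @ [u]) = K - j" "set (ys @ [u]) \<subseteq> I"
      using True u by auto
    then have "prod_list (ys @ [u]) * x = 0"
      using x unfolding ann_def by blast
    then show "prod_list ys * (u * x) = 0"
      by (simp add: mult.assoc)
  qed
next
  case False
  then have "x = 0"
    using ann_eq_0[OF _ x] by simp
  then show ?thesis
    using zero_mem_ann by simp
qed

lemma ann_antimono:
  assumes "j \<le> j'" and x: "x \<in> ann j'"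
  shows "x \<in> ann j"
  unfolding ann_def
proof (intro CollectI allI impI)
  fix ys assume "length ys = K - j" "set ys \<subseteq> I"
  then have "length (drop (j' - j) ys) = K - j'" "set (drop (j' - j) ys) \<subseteq> I"
    using assms(1) by (auto dest: in_set_dropD)
  then have "prod_list (drop (j' - j) ys) * x = 0"
    using x unfolding ann_def by blast
  then show "prod_list ys * x = 0"
    by (metis append_take_drop_id mult.assoc mult_zero_right prod_list.append)
qed

lemma mem_ann_1: "x \<in> I \<Longrightarrow> x \<in> ann 1"
  using mult_left_mem_ann[of x 1 0] mem_ann_0 by simp

lemma idempotent_lift:
  assumes "e * e - e \<in> I"
  obtains e' where "e' * e' = e'" and "e' - e \<in> I"
proof -
  define g where "g x = 3 * x * x - 2 * x * x * x" for x :: 'a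
  define t where "t n = (g ^^ n) e * (g ^^ n) e - (g ^^ n) e" for n
  have step: "t (Suc n) = t n * (t n * (4 * t n - 3))"
    "(g ^^ Suc n) e - (g ^^ n) e = t n * (1 - 2 * (g ^^ n) e)" for n
    unfolding t_def funpow.simps(2) o_apply g_def by (fact idempotent_newton_step)+
  have inv: "t n \<in> I \<and> t n \<in> ann (Suc n) \<and> (g ^^ n) e - e \<in> I" for n
  proof (induction n)
    case 0
    then show ?case
      using assms mem_ann_1 zero_mem by (simp add: t_def)
  next
    case (Suc n)
    have eq: "(g ^^ Suc n) e - e = t n * (1 - 2 * (g ^^ n) e) + ((g ^^ n) e - e)"
      using step(2)[of n] by (simp add: algebra_simps)
    have "(g ^^ Suc n) e - e \<in> I"
      unfolding eq using Suc by (intro add_mem mult_right_mem) auto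
    moreover have "t (Suc n) \<in> I" "t (Suc n) \<in> ann (Suc (Suc n))"
      using Suc step(1) mult_right_mem mult_left_mem_ann mult_right_mem_ann by auto
    ultimately show ?case
      by blast
  qed
  have "t K = 0"
    using ann_eq_0[of "Suc K" "t K"] inv[of K] by simp
  then show ?thesis
    using inv[of K] that unfolding t_def by simp
qed

lemma weakly_nil_clean_lift:
  assumes "e * e - e \<in> I" and "q ^ k \<in> I" and "a = q + e \<or> a = q - e"
  shows "\<exists>e'. e' * e' = e' \<and> (nilpotent (a - e') \<or> nilpotent (a + e'))"
proof -
  obtain e' where e': "e' * e' = e'" "e' - e \<in> I"
    using idempotent_lift assms(1) by blast
  from assms(3) show ?thesis
  proof
    assume "a = q + e"
    then have "(a - e') - q = - (e' - e)"
      by (simp add: algebra_simps)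
    then have "nilpotent (a - e')"
      using nilpotent_if_diff_mem e'(2) uminus_mem assms(2) by metis
    then show ?thesis
      using e'(1) by blast
  next
    assume "a = q - e"
    then have "(a + e') - q = e' - e"
      by (simp add: algebra_simps)
    then have "nilpotent (a + e')"
      using nilpotent_if_diff_mem e'(2) assms(2) by metis
    then show ?thesis
      using e'(1) by blast
  qed
qed

end

section \<open>Morita context rings\<close>

lemma zero_mem_pair_image: "0 \<in> pair_image f"
  unfolding pair_image_def by (rule CollectI, rule exI[of _ 0]) simp

lemma add_mem_pair_image_single:
  assumes "x \<in> pair_image f"
  shows "x + f u v \<in> pair_image f"
proof -
  obtain k :: nat and us vs where x: "x = (\<Sum>i<k. f (us i) (vs i))"
    using assms unfolding pair_image_def by blast
  have "x + f u v = (\<Sum>i<Suc k. f ((us(k := u)) i) ((vs(k := v)) i))"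
    unfolding x by simp
  then show ?thesis
    unfolding pair_image_def by blast
qed

lemma mem_pair_image: "f u v \<in> pair_image f"
  using add_mem_pair_image_single[OF zero_mem_pair_image, of f u v] by simp

lemma pair_image_induct[consumes 1, case_names zero add]:
  assumes "x \<in> pair_image f" and "P 0" and "\<And>x u v. P x \<Longrightarrow> P (x + f u v)"
  shows "P x"
proof -
  obtain k :: nat and us vs where "x = (\<Sum>i<k. f (us i) (vs i))"
    using assms(1) unfolding pair_image_def by blast
  moreover have "P (\<Sum>i<k. f (us i) (vs i))"
    by (induction k) (auto intro: assms(2,3))
  ultimately show ?thesis
    by simp
qed

lemma add_mem_pair_image:
  assumes "x \<in> pair_image f" and "y \<in> pair_image f"
  shows "x + y \<in> pair_image f"
  using assms(2)
proof (induction y rule: pair_image_induct)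
  case zero
  then show ?case
    using assms(1) by simp
next
  case (add y u v)
  then show ?case
    using add_mem_pair_image_single[OF add] by (simp add: add.assoc)
qed

locale morita =
  fixes lA :: "'a::ring_1 \<Rightarrow> 'm::ab_group_add \<Rightarrow> 'm"
    and rB :: "'m \<Rightarrow> 'b::ring_1 \<Rightarrow> 'm"
    and lB :: "'b \<Rightarrow> 'n::ab_group_add \<Rightarrow> 'n"
    and rA :: "'n \<Rightarrow> 'a \<Rightarrow> 'n"
    and phi :: "'m \<Rightarrow> 'n \<Rightarrow> 'a"
    and psi :: "'n \<Rightarrow> 'm \<Rightarrow> 'b"
  assumes M_bimodule:
      "lA (a + a') m = lA a m + lA a' m" "lA a (m + m') = lA a m + lA a m'"
      "lA (a * a') m = lA a (lA a' m)" "lA 1 m = m"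
      "rB m (b + b') = rB m b + rB m b'" "rB (m + m') b = rB m b + rB m' b"
      "rB m (b * b') = rB (rB m b) b'" "rB m 1 = m"
      "lA a (rB m b) = rB (lA a m) b"
    and N_bimodule:
      "lB (b + b') n = lB b n + lB b' n" "lB b (n + n') = lB b n + lB b n'"
      "lB (b * b') n = lB b (lB b' n)" "lB 1 n = n"
      "rA n (a + a') = rA n a + rA n a'" "rA (n + n') a = rA n a + rA n' a"
      "rA n (a * a') = rA (rA n a) a'" "rA n 1 = n"
      "lB b (rA n a) = rA (lB b n) a"
    and phi_laws:
      "phi (m + m') n = phi m n + phi m' n" "phi m (n + n') = phi m n + phi m n'"
      "phi (rB m b) n = phi m (lB b n)" "phi (lA a m) n = a * phi m n"
      "phi m (rA n a) = phi m n * a"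
    and psi_laws:
      "psi (n + n') m = psi n m + psi n' m" "psi n (m + m') = psi n m + psi n m'"
      "psi (rA n a) m = psi n (lA a m)" "psi (lB b n) m = b * psi n m"
      "psi n (rB m b) = psi n m * b"
    and pairing_assoc:
      "lA (phi m n) m' = rB m (psi n m')" "lB (psi n m) n' = rA n (phi m n')"

lemma morita_context_iff: "morita_context lA rB lB rA phi psi \<longleftrightarrow> morita lA rB lB rA phi psi"
  unfolding morita_context_def morita_def by (simp only: conj_assoc)

text \<open>Exchanging the roles of \<open>A\<close> and \<open>B\<close> (and of \<open>M\<close> and \<open>N\<close>) gives again a Morita context;
  through it every fact about \<open>MN\<close> below is also available for \<open>NM\<close>.\<close>
sublocale morita \<subseteq> swap: morita lB rA lA rB psi phi
  by unfold_locales (fact N_bimodule M_bimodule psi_laws phi_laws pairing_assoc)+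

context morita
begin

abbreviation MN :: "'a set" where "MN \<equiv> pair_image phi"
abbreviation NM :: "'b set" where "NM \<equiv> pair_image psi"

abbreviation mul where "mul \<equiv> morita_mult lA rB lB rA phi psi"

lemma zero_laws[simp]:
  "lA 0 m = 0" "lA a 0 = 0" "rB 0 b = 0" "rB m 0 = 0" "phi 0 n = 0" "phi m 0 = 0"
  using M_bimodule(1)[of 0 0 m] M_bimodule(2)[of a 0 0] M_bimodule(6)[of 0 0 b]
    M_bimodule(5)[of m 0 0] phi_laws(1)[of 0 0 n] phi_laws(2)[of m 0 0]
  by simp_all

lemma phi_uminus_left: "phi (- m) n = - phi m n"
  using phi_laws(1)[of m "- m" n] by (simp add: eq_neg_iff_add_eq_0 add.commute)

lemma uminus_mem_MN: "x \<in> MN \<Longrightarrow> - x \<in> MN"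
proof (induction x rule: pair_image_induct)
  case zero
  then show ?case
    by (simp add: zero_mem_pair_image)
next
  case (add x u v)
  then show ?case
    using add_mem_pair_image_single[of "- x" phi "- u" v] by (simp add: phi_uminus_left)
qed

lemma mult_left_mem_MN: "x \<in> MN \<Longrightarrow> a * x \<in> MN"
  by (induction x rule: pair_image_induct)
    (auto simp: zero_mem_pair_image distrib_left phi_laws(4)[symmetric]
      intro: add_mem_pair_image_single)

lemma mult_right_mem_MN: "x \<in> MN \<Longrightarrow> x * a \<in> MN"
  by (induction x rule: pair_image_induct)
    (auto simp: zero_mem_pair_image distrib_right phi_laws(5)[symmetric]
      intro: add_mem_pair_image_single)

end

context morita
begin

lemma mul_entries[simp]: "mul (a, m, n, b) (a', m', n', b') =
   (a * a' + phi m n', lA a m' + rB m b', lB b n' + rA n a', psi n m' + b * b')"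
  by (simp add: morita_mult_def)

lemma mul_assoc: "mul (mul X Y) Z = mul X (mul Y Z)"
  by (cases X; cases Y; cases Z)
    (simp add: M_bimodule N_bimodule phi_laws psi_laws pairing_assoc algebra_simps)

lemma mul_one_left: "mul morita_one X = X"
  by (cases X) (simp add: morita_one_def M_bimodule N_bimodule)

definition mpow :: "'a \<times> 'm \<times> 'n \<times> 'b \<Rightarrow> nat \<Rightarrow> 'a \<times> 'm \<times> 'n \<times> 'b" where
  "mpow X k = (mul X ^^ k) morita_one"

lemma mpow_0[simp]: "mpow X 0 = morita_one"
  and mpow_Suc[simp]: "mpow X (Suc k) = mul X (mpow X k)"
  by (simp_all add: mpow_def)

lemma mpow_add: "mpow X (k + l) = mul (mpow X k) (mpow X l)"
  by (induction k) (simp_all add: mul_one_left mul_assoc)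

lemma mpow_mult: "mpow (mpow X k) l = mpow X (k * l)"
  by (induction l) (simp_all add: mpow_add[symmetric])

lemma nil_op_iff_mpow: "nil_op mul morita_zero morita_one X \<longleftrightarrow> (\<exists>k. mpow X k = morita_zero)"
  by (simp add: nil_op_def mpow_def)

lemma mpow_diagonal:
  assumes "mpow (x, m, n, y) k = (a, m', n', b)"
  shows "a - x ^ k \<in> MN \<and> b - y ^ k \<in> NM"
  using assms
proof (induction k arbitrary: a m' n' b)
  case 0
  then show ?case
    by (simp add: morita_one_def zero_mem_pair_image)
next
  case (Suc k)
  obtain a0 m0 n0 b0 where pow: "mpow (x, m, n, y) k = (a0, m0, n0, b0)"
    by (metis prod.exhaust)
  then have "a = x * a0 + phi m n0" "b = psi n m0 + y * b0"
    using Suc.prems by simp_all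
  then have "a - x ^ Suc k = x * (a0 - x ^ k) + phi m n0"
    "b - y ^ Suc k = psi n m0 + y * (b0 - y ^ k)"
    by (simp_all add: algebra_simps)
  then show ?case
    using Suc.IH[OF pow] by (simp add: add_mem_pair_image mem_pair_image mult_left_mem_MN
        swap.mult_left_mem_MN)
qed

text \<open>This uses \<open>0 \<noteq> 1\<close>, which the class \<open>ring_1\<close> includes.\<close>
lemma corner_not_unit:
  "\<not> unit_op mul morita_one (a, 0, 0, 0)" "\<not> unit_op mul morita_one (0, 0, 0, b)"
  unfolding unit_op_def morita_one_def by (auto simp: morita_mult_def split: prod.splits)

end

locale nilpotent_morita = morita lA rB lB rA phi psi
  for lA :: "'a::ring_1 \<Rightarrow> 'm::ab_group_add \<Rightarrow> 'm"
    and rB :: "'m \<Rightarrow> 'b::ring_1 \<Rightarrow> 'm"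
    and lB :: "'b \<Rightarrow> 'n::ab_group_add \<Rightarrow> 'n"
    and rA :: "'n \<Rightarrow> 'a \<Rightarrow> 'n"
    and phi :: "'m \<Rightarrow> 'n \<Rightarrow> 'a"
    and psi :: "'n \<Rightarrow> 'm \<Rightarrow> 'b" +
  fixes KA KB :: nat
  assumes MN_nilpotent: "length xs = KA \<Longrightarrow> set xs \<subseteq> pair_image phi \<Longrightarrow> prod_list xs = 0"
    and NM_nilpotent: "length ys = KB \<Longrightarrow> set ys \<subseteq> pair_image psi \<Longrightarrow> prod_list ys = 0"

sublocale nilpotent_morita \<subseteq> MN: nilpotent_ideal "pair_image phi" KA
  by unfold_locales (simp_all add: zero_mem_pair_image add_mem_pair_image uminus_mem_MN
      mult_left_mem_MN mult_right_mem_MN MN_nilpotent)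

sublocale nilpotent_morita \<subseteq> NM: nilpotent_ideal "pair_image psi" KB
  by unfold_locales (simp_all add: zero_mem_pair_image add_mem_pair_image swap.uminus_mem_MN
      swap.mult_left_mem_MN swap.mult_right_mem_MN NM_nilpotent)

sublocale nilpotent_morita \<subseteq> swap: nilpotent_morita lB rA lA rB psi phi KB KA
  by unfold_locales (fact NM_nilpotent MN_nilpotent)+

context nilpotent_morita
begin

lemma diagonal_entry_mem_ann:
  assumes "u \<in> MN" and "a \<in> MN.ann i" and "\<And>m'. phi m' n \<in> MN.ann j"
    and "k \<le> Suc i" and "k \<le> j"
  shows "u * a + phi m n \<in> MN.ann k"
  using assms by (meson MN.add_mem_ann MN.ann_antimono MN.mult_left_mem_ann)

lemma off_diagonal_entry_mem_ann:
  assumes "v \<in> NM" and "a \<in> MN.ann i" and "\<And>m'. phi m' n \<in> MN.ann j"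
    and "k \<le> Suc i" and "k \<le> Suc j"
  shows "phi m' (lB v n + rA n' a) \<in> MN.ann k"
proof -
  have "phi m' (lB v n) \<in> MN.ann (Suc j)"
    using assms(1)
  proof (induction v rule: pair_image_induct)
    case zero
    then show ?case
      by (simp add: MN.zero_mem_ann)
  next
    case (add v u w)
    have "phi m' (lB (v + psi u w) n) = phi m' (lB v n) + phi m' u * phi w n"
      by (simp add: N_bimodule phi_laws pairing_assoc)
    then show ?case
      using add assms(3) by (simp add: MN.add_mem_ann MN.mult_left_mem_ann mem_pair_image)
  qed
  moreover have "phi m' n' * a \<in> MN.ann (Suc i)"
    using assms(2) by (simp add: MN.mult_left_mem_ann mem_pair_image)
  ultimately show ?thesis
    using assms(4,5) by (simp add: phi_laws MN.add_mem_ann MN.ann_antimono)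
qed

end

context nilpotent_morita
begin

text \<open>Entries of \<open>MN\<close> and \<open>NM\<close> count with weight 2, entries of \<open>M\<close> and \<open>N\<close> with weight 1.
  Weight \<open>w\<close> is measured through \<open>ann\<close>, i.e. by powers of \<open>MN\<close> and \<open>NM\<close>: \<open>\<lceil>w/2\<rceil>\<close> for the
  diagonal entries, and \<open>\<lceil>(w+1)/2\<rceil>\<close> for the off-diagonal ones after pairing them into \<open>MN\<close>, \<open>NM\<close>.\<close>
definition weight :: "nat \<Rightarrow> 'a \<times> 'm \<times> 'n \<times> 'b \<Rightarrow> bool" where
  "weight w X \<longleftrightarrow> (case X of (a, m, n, b) \<Rightarrow>
     a \<in> MN.ann ((w + 1) div 2) \<and> b \<in> NM.ann ((w + 1) div 2) \<and>
     (\<forall>m'. phi m' n \<in> MN.ann (w div 2 + 1)) \<and> (\<forall>n'. psi n' m \<in> NM.ann (w div 2 + 1)))"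

lemma weight_mult:
  assumes "u \<in> MN" and "v \<in> NM" and "weight w X"
  shows "weight (Suc w) (mul (u, m, n, v) X)"
proof -
  obtain a m1 n1 b where X: "X = (a, m1, n1, b)"
    by (metis prod.exhaust)
  have "a \<in> MN.ann ((w + 1) div 2)" "b \<in> NM.ann ((w + 1) div 2)"
    "\<And>m'. phi m' n1 \<in> MN.ann (w div 2 + 1)" "\<And>n'. psi n' m1 \<in> NM.ann (w div 2 + 1)"
    using assms(3) unfolding weight_def X by auto
  moreover have "w div 2 \<le> Suc w div 2" "Suc w div 2 \<le> Suc (w div 2)"
    by presburger+
  ultimately show ?thesis
    unfolding X weight_def using assms(1,2)
    by (auto simp: add.commute[of "psi n m1"] intro!: diagonal_entry_mem_ann
        off_diagonal_entry_mem_ann swap.diagonal_entry_mem_ann swap.off_diagonal_entry_mem_ann)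
qed

lemma weight_mpow:
  assumes "u \<in> MN" and "v \<in> NM"
  shows "weight w (mpow (u, m, n, v) w)"
proof (induction w)
  case 0
  then show ?case
    by (simp add: weight_def morita_one_def MN.mem_ann_0 NM.mem_ann_0 MN.zero_mem_ann
        NM.zero_mem_ann)
next
  case (Suc w)
  then show ?case
    using weight_mult assms by simp
qed

lemma mpow_eq_zero:
  assumes "u \<in> MN" and "v \<in> NM"
  shows "mpow (u, m, n, v) (4 * (KA + KB)) = morita_zero"
proof -
  define J where "J = KA + KB"
  obtain a m1 n1 b where W: "mpow (u, m, n, v) (2 * J) = (a, m1, n1, b)"
    by (metis prod.exhaust)
  have "a \<in> MN.ann J" "b \<in> NM.ann J" "phi m1 n1 \<in> MN.ann (Suc J)" "psi n1 m1 \<in> NM.ann (Suc J)"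
    using weight_mpow[OF assms, where m = m and n = n and w = "2 * J"]
    unfolding W weight_def by auto
  moreover have "KA \<le> J" "KB \<le> J"
    by (simp_all add: J_def)
  ultimately have "a = 0" "b = 0" "phi m1 n1 = 0" "psi n1 m1 = 0"
    by (meson MN.ann_eq_0 NM.ann_eq_0 le_SucI)+
  then have "mul (mpow (u, m, n, v) (2 * J)) (mpow (u, m, n, v) (2 * J)) = morita_zero"
    unfolding W by (simp add: morita_zero_def)
  then show ?thesis
    by (simp add: mpow_add[symmetric] J_def)
qed

lemma nilpotent_if_diagonal_nilpotent:
  assumes "nilpotent x" and "nilpotent y"
  shows "nil_op mul morita_zero morita_one (x, m, n, y)"
proof -
  obtain k where "x ^ k = 0" "y ^ k = 0"
    using assms unfolding nilpotent_def by (metis power_add add.commute mult_zero_right)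
  moreover obtain a m' n' b where pow: "mpow (x, m, n, y) k = (a, m', n', b)"
    by (metis prod.exhaust)
  ultimately have "a \<in> MN" "b \<in> NM"
    using mpow_diagonal[OF pow] by simp_all
  then have "mpow (x, m, n, y) (k * (4 * (KA + KB))) = morita_zero"
    using mpow_eq_zero by (simp add: pow mpow_mult[symmetric])
  then show ?thesis
    unfolding nil_op_iff_mpow by blast
qed

lemma corner_decompositions:
  assumes "nil_op mul morita_zero morita_one Q" and "idem_op mul E"
    and "(a, m, n, b) = morita_add Q E \<or> (a, m, n, b) = morita_add Q (morita_neg E)"
  shows "(\<exists>e. e * e = e \<and> (nilpotent (a - e) \<or> nilpotent (a + e))) \<and>
         (\<exists>f. f * f = f \<and> (nilpotent (b - f) \<or> nilpotent (b + f)))"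
proof -
  obtain q qm qn q' where Q: "Q = (q, qm, qn, q')"
    by (metis prod.exhaust)
  obtain e em en e' where E: "E = (e, em, en, e')"
    by (metis prod.exhaust)
  obtain k where "mpow (q, qm, qn, q') k = (0, 0, 0, 0)"
    using assms(1)[unfolded nil_op_iff_mpow] unfolding Q morita_zero_def by blast
  then have "0 - q ^ k \<in> MN \<and> 0 - q' ^ k \<in> NM"
    by (rule mpow_diagonal)
  then have "q ^ k \<in> MN" "q' ^ k \<in> NM"
    using MN.uminus_mem[of "- (q ^ k)"] NM.uminus_mem[of "- (q' ^ k)"] by simp_all
  moreover have "e * e + phi em en = e" "psi en em + e' * e' = e'"
    using assms(2) unfolding idem_op_def E by simp_all
  then have "e * e - e = - phi em en" "e' * e' - e' = - psi en em"
    by (simp_all add: algebra_simps)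
  then have "e * e - e \<in> MN" "e' * e' - e' \<in> NM"
    by (simp_all add: MN.uminus_mem NM.uminus_mem mem_pair_image)
  moreover have "a = q + e \<or> a = q - e" "b = q' + e' \<or> b = q' - e'"
    using assms(3) unfolding Q E by (auto simp: morita_add_def morita_neg_def)
  ultimately show ?thesis
    using MN.weakly_nil_clean_lift NM.weakly_nil_clean_lift by blast
qed

lemma weakly_nil_clean_if_GWNC:
  assumes "GWNC_op mul morita_add morita_neg morita_zero morita_one"
  shows "weakly_nil_clean TYPE('a) \<and> weakly_nil_clean TYPE('b)"
proof -
  have corners: "(\<exists>e. e * e = e \<and> (nilpotent (a - e) \<or> nilpotent (a + e))) \<and>
      (\<exists>f. f * f = f \<and> (nilpotent (b - f) \<or> nilpotent (b + f)))"
    if non_unit: "\<not> unit_op mul morita_one (a, m, n, b)" for a m n b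
  proof -
    obtain Q E where "nil_op mul morita_zero morita_one Q" "idem_op mul E"
      "(a, m, n, b) = morita_add Q E \<or> (a, m, n, b) = morita_add Q (morita_neg E)"
      using assms non_unit unfolding GWNC_op_def by blast
    then show ?thesis
      by (rule corner_decompositions)
  qed
  have "\<exists>e. e * e = e \<and> (nilpotent (a - e) \<or> nilpotent (a + e))" for a :: 'a
    using corners[OF corner_not_unit(1)] by blast
  moreover have "\<exists>f. f * f = f \<and> (nilpotent (b - f) \<or> nilpotent (b + f))" for b :: 'b
    using corners[OF corner_not_unit(2)] by blast
  ultimately show ?thesis
    unfolding weakly_nil_clean_iff by blast
qed

lemma GWNC_if_common_sign_choice:
  assumes "\<And>(a::'a) (b::'b). \<exists>e f. e * e = e \<and> f * f = f \<and>
    ((nilpotent (a - e) \<and> nilpotent (b - f)) \<or> (nilpotent (a + e) \<and> nilpotent (b + f)))"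
  shows "GWNC_op mul morita_add morita_neg morita_zero morita_one"
  unfolding GWNC_op_def
proof (intro allI impI)
  fix X :: "'a \<times> 'm \<times> 'n \<times> 'b"
  obtain a m n b where X: "X = (a, m, n, b)"
    by (metis prod.exhaust)
  obtain e f where ef: "e * e = e" "f * f = f" and
    signs: "(nilpotent (a - e) \<and> nilpotent (b - f)) \<or> (nilpotent (a + e) \<and> nilpotent (b + f))"
    using assms by blast
  have idem: "idem_op mul (e, 0, 0, f)"
    unfolding idem_op_def by (simp add: ef)
  from signs show "\<exists>Q E. nil_op mul morita_zero morita_one Q \<and> idem_op mul E \<and>
      (X = morita_add Q E \<or> X = morita_add Q (morita_neg E))"
  proof
    assume "nilpotent (a - e) \<and> nilpotent (b - f)"
    then have "nil_op mul morita_zero morita_one (a - e, m, n, b - f)"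
      by (simp add: nilpotent_if_diagonal_nilpotent)
    moreover have "X = morita_add (a - e, m, n, b - f) (e, 0, 0, f)"
      unfolding X by (simp add: morita_add_def)
    ultimately show ?thesis
      using idem by blast
  next
    assume "nilpotent (a + e) \<and> nilpotent (b + f)"
    then have "nil_op mul morita_zero morita_one (a + e, m, n, b + f)"
      by (simp add: nilpotent_if_diagonal_nilpotent)
    moreover have "X = morita_add (a + e, m, n, b + f) (morita_neg (e, 0, 0, f))"
      unfolding X by (simp add: morita_add_def morita_neg_def)
    ultimately show ?thesis
      using idem by blast
  qed
qed

end

theorem proposition2p50:
  fixes lA :: "'a::ring_1 \<Rightarrow> 'm::ab_group_add \<Rightarrow> 'm"
    and rB :: "'m \<Rightarrow> 'b::ring_1 \<Rightarrow> 'm"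
    and lB :: "'b \<Rightarrow> 'n::ab_group_add \<Rightarrow> 'n"
    and rA :: "'n \<Rightarrow> 'a \<Rightarrow> 'n"
    and phi :: "'m \<Rightarrow> 'n \<Rightarrow> 'a"
    and psi :: "'n \<Rightarrow> 'm \<Rightarrow> 'b"
  assumes ctx: "morita_context lA rB lB rA phi psi"
    and MN: "nilpotent_set (pair_image phi)"
    and NM: "nilpotent_set (pair_image psi)"
  shows "(GWNC_op (morita_mult lA rB lB rA phi psi) morita_add morita_neg morita_zero morita_one
            \<longrightarrow> weakly_nil_clean TYPE('a) \<and> weakly_nil_clean TYPE('b))
       \<and> (((nil_clean TYPE('a) \<and> weakly_nil_clean TYPE('b)) \<or>
            (weakly_nil_clean TYPE('a) \<and> nil_clean TYPE('b)))
            \<longrightarrow> GWNC_op (morita_mult lA rB lB rA phi psi) morita_add morita_neg morita_zero morita_one)"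
proof -
  obtain KA KB where
    "\<And>xs. length xs = KA \<Longrightarrow> set xs \<subseteq> pair_image phi \<Longrightarrow> prod_list xs = 0"
    "\<And>ys. length ys = KB \<Longrightarrow> set ys \<subseteq> pair_image psi \<Longrightarrow> prod_list ys = 0"
    using MN NM unfolding nilpotent_set_iff by blast
  with ctx interpret nilpotent_morita lA rB lB rA phi psi KA KB
    by (intro nilpotent_morita.intro nilpotent_morita_axioms.intro)
      (simp_all add: morita_context_iff)
  show ?thesis
    by (intro conjI impI GWNC_if_common_sign_choice common_sign_choice)
      (simp_all add: weakly_nil_clean_if_GWNC)
qed

end
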